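(* Let $n\ge p\ge1$, $\lambda>0$, $0<\varepsilon<\frac34$, and let $f:\mathbb{R}^{n\times p}\to\mathbb{R}$ be twice continuously differentiable. Let $\mathrm{St}(p,n)^\varepsilon=\{X:\|X^\top X-I_p\|\le\varepsilon\}$, let $L>0$ be such that $\nabla f$ is $L$-Lipschitz on $\mathrm{St}(p,n)^\varepsilon$, $L'=\max_{X\in\mathrm{St}(p,n)^\varepsilon}\|\nabla f(X)\|$, $\hat L=\max(L,L')$, and $s=\sup_{X\in\mathrm{St}(p,n)^\varepsilon}\|\mathrm{sym}(X^\top\nabla f(X))\|$. Let $$\mu\ge\frac{2}{3-4\varepsilon}\left(L(1-\varepsilon)+3s+\hat L^2\frac{(1+\varepsilon)^2}{\lambda(1-\varepsilon)}\right),\qquad \nu=\lambda\mu,$$ and $\mathcal{L}(X)=f(X)-\frac12\langle\mathrm{sym}(X^\top\nabla f(X)),X^\top X-I_p\rangle+\mu\mathcal{N}(X)$. Then for all $X\in\mathrm{St}(p,n)^\varepsilon$, $$\langle\nabla\mathcal{L}(X),\Lambda(X)\rangle\ge\frac12\|\mathrm{grad}f(X)\|^2+\nu\mathcal{N}(X).$$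
   Context: $\|\cdot\|$ and $\langle\cdot,\cdot\rangle$ are the Frobenius norm and inner product. $\mathrm{sym}(M)=\frac12(M+M^\top)$, $\mathrm{skew}(M)=\frac12(M-M^\top)$. $\mathcal{N}(X)=\frac14\|X^\top X-I_p\|^2$. For all $X\in\mathbb{R}^{n\times p}$, $\mathrm{grad}f(X)=\mathrm{skew}(\nabla f(X)X^\top)X$, and the landing field is $\Lambda(X)=\mathrm{grad}f(X)+\lambda X(X^\top X-I_p)$. *)

theory Defs
  imports "HOL-Analysis.Analysis"
begin

text \<open>Matrices in R^(n x p) are rendered as real^'p^'n (rows indexed by 'n, columns by 'p).
  The Euclidean inner product and norm on this type are exactly the Frobenius ones.\<close>

definition fgrad :: "('a::euclidean_space \<Rightarrow> real) \<Rightarrow> 'a \<Rightarrow> 'a" where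
  "fgrad F x = (THE g. (F has_derivative (\<lambda>h. g \<bullet> h)) (at x))"

definition twice_cont_diff :: "('a::euclidean_space \<Rightarrow> real) \<Rightarrow> bool" where
  "twice_cont_diff F \<longleftrightarrow>
     (\<forall>x. F differentiable at x) \<and> (\<forall>x. fgrad F differentiable at x) \<and>
     (\<forall>h. continuous_on UNIV (\<lambda>x. frechet_derivative (fgrad F) (at x) h))"

definition msym :: "real^'m^'m \<Rightarrow> real^'m^'m" where
  "msym M = (1/2) *\<^sub>R (M + transpose M)"

definition mskew :: "real^'m^'m \<Rightarrow> real^'m^'m" where
  "mskew M = (1/2) *\<^sub>R (M - transpose M)"

definition Ncal :: "real^'p^'n \<Rightarrow> real" where
  "Ncal X = (1/4) * (norm (transpose X ** X - mat 1))\<^sup>2"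

definition stiefel_eps :: "real \<Rightarrow> (real^'p^'n) set" where
  "stiefel_eps \<epsilon> = {X. norm (transpose X ** X - mat 1) \<le> \<epsilon>}"

definition rgrad :: "(real^'p^'n \<Rightarrow> real) \<Rightarrow> real^'p^'n \<Rightarrow> real^'p^'n" where
  "rgrad f X = mskew (fgrad f X ** transpose X) ** X"

definition landing :: "(real^'p^'n \<Rightarrow> real) \<Rightarrow> real \<Rightarrow> real^'p^'n \<Rightarrow> real^'p^'n" where
  "landing f lam X = rgrad f X + lam *\<^sub>R (X ** (transpose X ** X - mat 1))"

definition Lcal :: "(real^'p^'n \<Rightarrow> real) \<Rightarrow> real \<Rightarrow> real^'p^'n \<Rightarrow> real" where
  "Lcal f \<mu> X = f X - (1/2) * (msym (transpose X ** fgrad f X) \<bullet> (transpose X ** X - mat 1))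
                 + \<mu> * Ncal X"

end

theory Submission
  imports Defs
begin

text \<open>Write \<open>G = \<nabla>f(X)\<close>, \<open>C = X\<^sup>T X - I\<close> and \<open>\<Omega> = skew(G X\<^sup>T)\<close>, so that \<open>\<Lambda> = \<Omega> X + \<lambda> X C\<close>.
  Since \<open>X\<^sup>T \<Omega> X\<close> is skew while \<open>C\<close> and \<open>sym(X\<^sup>T G)\<close> are symmetric, the two parts of \<open>\<Lambda>\<close>
  decouple in \<open>\<langle>\<nabla>\<L>(X), \<Lambda>\<rangle>\<close>: it equals \<open>|\<Omega>|\<^sup>2\<close>, plus cross terms of size at most
  \<open>max(L, |\<nabla>f|) |\<Omega> X| (|C| + |X C|)\<close>, plus \<open>\<lambda>\<close> times a quadratic form in \<open>X C\<close> with leading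
  coefficient \<open>\<mu>\<close>. On \<open>St(p,n)\<^sup>\<epsilon>\<close>, multiplication by \<open>X\<close> changes squared norms by a factor in
  \<open>[1 - \<epsilon>, 1 + \<epsilon>]\<close>, and the Hessian of \<open>f\<close> is bounded by \<open>L\<close>: in the interior because \<open>\<nabla>f\<close> is
  \<open>L\<close>-Lipschitz, on the boundary by continuity of the Hessian. Completing the square in \<open>|\<Omega> X|\<close>
  absorbs the cross terms into \<open>|\<Omega>|\<^sup>2 - |\<Omega> X|\<^sup>2/2\<close> and the surplus of the \<open>\<mu>\<close>-term.\<close>

section \<open>Frobenius calculus for matrices\<close>

lemma inner_matrix_mult_right:
  "((A::real^'k^'m) ** (B::real^'l^'k)) \<bullet> C = A \<bullet> (C ** transpose B)"
  by (simp add: inner_vec_def matrix_matrix_mult_def transpose_def sum_distrib_left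
      sum_distrib_right mult_ac) (rule sum.cong[OF refl], rule sum.swap)

lemma inner_transpose: "transpose (A::real^'k^'m) \<bullet> transpose B = A \<bullet> B"
  by (simp add: inner_vec_def transpose_def) (rule sum.swap)

lemma norm_transpose: "norm (transpose (A::real^'k^'m)) = norm A"
  by (simp add: norm_eq_sqrt_inner inner_transpose)

lemma inner_matrix_mult_left:
  "((A::real^'k^'m) ** (B::real^'l^'k)) \<bullet> C = B \<bullet> (transpose A ** C)"
proof -
  have "(A ** B) \<bullet> C = (transpose B ** transpose A) \<bullet> transpose C"
    by (simp only: inner_transpose matrix_transpose_mul[symmetric])
  also have "\<dots> = transpose B \<bullet> transpose (transpose A ** C)"
    by (simp only: inner_matrix_mult_right matrix_transpose_mul transpose_transpose)
  also have "\<dots> = B \<bullet> (transpose A ** C)"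
    by (rule inner_transpose)
  finally show ?thesis .
qed

lemma norm_matrix_mult_le: "norm ((A::real^'k^'m) ** (B::real^'l^'k)) \<le> norm A * norm B"
proof -
  have entry: "((A ** B) $ i $ j)\<^sup>2 \<le> (norm (A $ i))\<^sup>2 * (norm (column j B))\<^sup>2" for i j
    using Cauchy_Schwarz_ineq[of "A $ i" "column j B"]
    by (simp add: matrix_matrix_mult_def inner_vec_def column_def power2_norm_eq_inner)
  have rows: "(norm A)\<^sup>2 = (\<Sum>i\<in>UNIV. (norm (A $ i))\<^sup>2)"
    by (simp add: power2_norm_eq_inner inner_vec_def)
  have "(norm B)\<^sup>2 = (norm (transpose B))\<^sup>2"
    by (simp only: norm_transpose)
  also have "\<dots> = (\<Sum>j\<in>UNIV. (norm (column j B))\<^sup>2)"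
    by (simp add: power2_norm_eq_inner inner_vec_def transpose_def column_def)
  finally have columns: "(norm B)\<^sup>2 = (\<Sum>j\<in>UNIV. (norm (column j B))\<^sup>2)" .
  have "(norm (A ** B))\<^sup>2 = (\<Sum>i\<in>UNIV. \<Sum>j\<in>UNIV. ((A ** B) $ i $ j)\<^sup>2)"
    unfolding power2_norm_eq_inner inner_vec_def inner_real_def by (simp add: power2_eq_square)
  also have "\<dots> \<le> (\<Sum>i\<in>UNIV. \<Sum>j\<in>UNIV. (norm (A $ i))\<^sup>2 * (norm (column j B))\<^sup>2)"
    by (intro sum_mono entry)
  also have "\<dots> = (norm A * norm B)\<^sup>2"
    by (simp add: rows columns power_mult_distrib sum_product)
  finally show ?thesis
    by (rule power2_le_imp_le) simp
qed

lemma abs_inner_matrix_mult_le: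
  "\<bar>(A::real^'l^'m) \<bullet> ((B::real^'k^'m) ** (C::real^'l^'k))\<bar> \<le> norm A * (norm B * norm C)"
  using Cauchy_Schwarz_ineq2[of A "B ** C"] norm_matrix_mult_le[of B C]
  by (simp add: order_trans mult_left_mono)

interpretation matrix_mult: bounded_bilinear "(**) :: real^'k^'m \<Rightarrow> real^'l^'k \<Rightarrow> real^'l^'m"
proof
  fix A A' :: "real^'k^'m" and B B' :: "real^'l^'k" and r :: real
  show "(A + A') ** B = A ** B + A' ** B"
    by (simp add: matrix_matrix_mult_def vec_eq_iff distrib_right sum.distrib)
  show "A ** (B + B') = A ** B + A ** B'"
    by (rule matrix_add_ldistrib)
  show "(r *\<^sub>R A) ** B = r *\<^sub>R (A ** B)"
    by (rule scalar_matrix_assoc[symmetric])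
  show "A ** (r *\<^sub>R B) = r *\<^sub>R (A ** B)"
    by (simp add: matrix_scalar_ac scalar_matrix_assoc)
  show "\<exists>K. \<forall>A B. norm ((A::real^'k^'m) ** (B::real^'l^'k)) \<le> norm A * norm B * K"
    using norm_matrix_mult_le by (metis mult.right_neutral)
qed

lemma transpose_add: "transpose ((A::real^'k^'m) + B) = transpose A + transpose B"
  by (simp add: transpose_def vec_eq_iff)

lemma transpose_diff: "transpose ((A::real^'k^'m) - B) = transpose A - transpose B"
  by (simp add: transpose_def vec_eq_iff)

lemma bounded_linear_transpose: "bounded_linear (transpose :: real^'k^'m \<Rightarrow> real^'m^'k)"
  by (rule bounded_linear_intro[where K=1])
    (simp_all add: transpose_add norm_transpose transpose_scalar)

lemma bounded_linear_msym: "bounded_linear (msym :: real^'m^'m \<Rightarrow> real^'m^'m)"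
  unfolding msym_def by (intro bounded_linear_intros bounded_linear_transpose)

lemmas has_derivative_matrix_mult = matrix_mult.FDERIV

lemmas has_derivative_transpose = bounded_linear.has_derivative[OF bounded_linear_transpose]

lemmas has_derivative_msym = bounded_linear.has_derivative[OF bounded_linear_msym]

lemma transpose_msym: "transpose (msym M) = msym M"
  by (simp add: msym_def transpose_scalar transpose_add add.commute)

lemma transpose_mskew: "transpose (mskew M) = - mskew M"
  by (simp add: mskew_def transpose_scalar transpose_diff flip: scaleR_minus_right)

lemma inner_transpose_symmetric:
  fixes S M :: "real^'m^'m"
  assumes "transpose S = S"
  shows "S \<bullet> transpose M = S \<bullet> M"
  by (metis assms inner_transpose)

lemma inner_msym_symmetric:
  assumes "transpose S = S"
  shows "msym M \<bullet> S = M \<bullet> S"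
  using inner_transpose_symmetric[OF assms, of M]
  by (simp add: msym_def inner_add_left inner_add_right inner_commute[of _ S])

lemma inner_symmetric_skew:
  fixes S K :: "real^'m^'m"
  assumes "transpose S = S" and "transpose K = - K"
  shows "S \<bullet> K = 0"
  using inner_transpose_symmetric[OF assms(1), of K] assms(2) by simp

lemma inner_mskew_self: "M \<bullet> mskew M = (norm (mskew M))\<^sup>2"
proof -
  have "M = msym M + mskew M"
    by (simp add: msym_def mskew_def vec_eq_iff field_simps)
  then have "M \<bullet> mskew M = msym M \<bullet> mskew M + mskew M \<bullet> mskew M"
    by (metis inner_add_left)
  then show ?thesis
    using inner_symmetric_skew[OF transpose_msym transpose_mskew, of M M]
    by (simp add: power2_norm_eq_inner inner_commute)
qed

lemma inner_matrix_mult_symmetric: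
  fixes S :: "real^'p^'p" and G X :: "real^'p^'n"
  assumes "transpose S = S"
  shows "G \<bullet> (X ** S) = msym (transpose X ** G) \<bullet> S"
proof -
  have "G \<bullet> (X ** S) = S \<bullet> (transpose X ** G)"
    by (simp only: inner_commute[of G] inner_matrix_mult_left)
  also have "\<dots> = (transpose X ** G) \<bullet> S"
    by (rule inner_commute)
  also have "\<dots> = msym (transpose X ** G) \<bullet> S"
    by (rule inner_msym_symmetric[OF assms, symmetric])
  finally show ?thesis .
qed

lemma norm_sq_matrix_mult_deviation:
  "\<bar>(norm ((X::real^'k^'m) ** (B::real^'l^'k)))\<^sup>2 - (norm B)\<^sup>2\<bar>
     \<le> norm (transpose X ** X - mat 1) * (norm B)\<^sup>2"
proof -
  define C where "C = transpose X ** X - mat 1"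
  have "(norm (X ** B))\<^sup>2 - (norm B)\<^sup>2 = B \<bullet> (C ** B)"
    by (simp add: C_def power2_norm_eq_inner inner_matrix_mult_left matrix_mul_assoc
        matrix_mult.diff_left inner_diff_right)
  then have "\<bar>(norm (X ** B))\<^sup>2 - (norm B)\<^sup>2\<bar> \<le> norm B * (norm C * norm B)"
    by (simp only: abs_inner_matrix_mult_le)
  then show ?thesis
    by (simp add: C_def power2_eq_square mult_ac)
qed

lemma norm_sq_matrix_mult_left_bounds:
  fixes X :: "real^'k^'m" and B :: "real^'l^'k"
  assumes "norm (transpose X ** X - mat 1) \<le> \<epsilon>"
  shows "(1 - \<epsilon>) * (norm B)\<^sup>2 \<le> (norm (X ** B))\<^sup>2"
    and "(norm (X ** B))\<^sup>2 \<le> (1 + \<epsilon>) * (norm B)\<^sup>2"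
proof -
  have "\<bar>(norm (X ** B))\<^sup>2 - (norm B)\<^sup>2\<bar> \<le> norm (transpose X ** X - mat 1) * (norm B)\<^sup>2"
    by (rule norm_sq_matrix_mult_deviation)
  also have "\<dots> \<le> \<epsilon> * (norm B)\<^sup>2"
    using assms by (rule mult_right_mono) simp
  finally show "(1 - \<epsilon>) * (norm B)\<^sup>2 \<le> (norm (X ** B))\<^sup>2"
    and "(norm (X ** B))\<^sup>2 \<le> (1 + \<epsilon>) * (norm B)\<^sup>2"
    by (simp_all add: abs_le_iff algebra_simps)
qed

lemma norm_sq_matrix_mult_right_le:
  fixes A :: "real^'k^'m" and X :: "real^'l^'k"
  assumes "norm (transpose X ** X - mat 1) \<le> \<epsilon>"
  shows "(norm (A ** X))\<^sup>2 \<le> (1 + \<epsilon>) * (norm A)\<^sup>2"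
proof -
  define W where "W = A ** X"
  have "0 \<le> \<epsilon>"
    using assms by (rule order_trans[OF norm_ge_zero])
  txt \<open>\<open>|W|\<^sup>2 = \<langle>A, W X\<^sup>T\<rangle>\<close>, and \<open>|W X\<^sup>T| = |X W\<^sup>T|\<close> is controlled by left multiplication
    with \<open>X\<close>.\<close>
  have "norm (W ** transpose X) \<le> sqrt (1 + \<epsilon>) * norm W"
  proof (rule power2_le_imp_le)
    have "(norm (W ** transpose X))\<^sup>2 = (norm (X ** transpose W))\<^sup>2"
      by (metis norm_transpose matrix_transpose_mul transpose_transpose)
    also have "\<dots> \<le> (1 + \<epsilon>) * (norm W)\<^sup>2"
      using norm_sq_matrix_mult_left_bounds(2)[OF assms, of "transpose W"] by (simp add: norm_transpose)
    finally show "(norm (W ** transpose X))\<^sup>2 \<le> (sqrt (1 + \<epsilon>) * norm W)\<^sup>2"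
      using \<open>0 \<le> \<epsilon>\<close> by (simp add: power_mult_distrib)
  qed (simp add: \<open>0 \<le> \<epsilon>\<close>)
  have "norm W * norm W = A \<bullet> (W ** transpose X)"
    by (simp add: W_def inner_matrix_mult_right[symmetric] norm_eq_sqrt_inner)
  also have "\<dots> \<le> norm A * norm (W ** transpose X)"
    by (rule norm_cauchy_schwarz)
  also have "\<dots> \<le> (sqrt (1 + \<epsilon>) * norm A) * norm W"
    using \<open>norm (W ** transpose X) \<le> _\<close> by (simp add: mult_left_mono mult_ac)
  finally have "norm W \<le> sqrt (1 + \<epsilon>) * norm A"
    by (cases "W = 0") (auto simp: \<open>0 \<le> \<epsilon>\<close>)
  then have "(norm W)\<^sup>2 \<le> (sqrt (1 + \<epsilon>) * norm A)\<^sup>2"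
    by (simp add: power_mono)
  then show ?thesis
    using \<open>0 \<le> \<epsilon>\<close> by (simp add: W_def power_mult_distrib)
qed

section \<open>Gradients, Lipschitz bounds and suprema\<close>

lemma has_derivative_fgrad:
  fixes F :: "'a::euclidean_space \<Rightarrow> real"
  assumes "F differentiable at x"
  shows "(F has_derivative (\<lambda>h. fgrad F x \<bullet> h)) (at x)"
proof -
  obtain D where D: "(F has_derivative D) (at x)"
    using assms by (auto simp: differentiable_def)
  define g where "g = (\<Sum>b\<in>Basis. D b *\<^sub>R b)"
  have "D = (\<lambda>h. g \<bullet> h)"
  proof
    fix h
    have "D h = D (\<Sum>b\<in>Basis. (h \<bullet> b) *\<^sub>R b)"
      by (simp add: euclidean_representation)
    also have "\<dots> = (\<Sum>b\<in>Basis. (h \<bullet> b) * D b)"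
      using has_derivative_linear[OF D] by (simp add: linear_sum linear_scale)
    also have "\<dots> = g \<bullet> h"
      by (simp add: g_def inner_sum_left inner_sum_right inner_commute mult.commute)
    finally show "D h = g \<bullet> h" .
  qed
  with D have g: "(F has_derivative (\<lambda>h. g \<bullet> h)) (at x)"
    by simp
  have "fgrad F x = g"
    unfolding fgrad_def
  proof (rule the_equality)
    show "(F has_derivative (\<lambda>h. g \<bullet> h)) (at x)"
      by (fact g)
  next
    fix g' assume "(F has_derivative (\<lambda>h. g' \<bullet> h)) (at x)"
    then have "(\<lambda>h. g' \<bullet> h) = (\<lambda>h. g \<bullet> h)"
      using g by (rule has_derivative_unique)
    then have "(g' - g) \<bullet> (g' - g) = 0"
      by (metis inner_diff_left right_minus_eq)
    then show "g' = g"
      by simp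
  qed
  with g show ?thesis
    by simp
qed

lemma fgrad_inner_eq:
  fixes F :: "'a::euclidean_space \<Rightarrow> real"
  assumes "(F has_derivative D) (at x)"
  shows "fgrad F x \<bullet> v = D v"
proof -
  have "(\<lambda>h. fgrad F x \<bullet> h) = D"
    using has_derivative_fgrad[OF differentiableI[OF assms]] assms by (rule has_derivative_unique)
  then show ?thesis
    by (simp add: fun_eq_iff)
qed

lemma continuous_on_fgrad:
  assumes "twice_cont_diff f"
  shows "continuous_on S (fgrad f)"
  using assms unfolding twice_cont_diff_def
  by (blast intro: differentiable_imp_continuous_on differentiable_at_imp_differentiable_on)

lemma isCont_derivative_remainder:
  assumes "(F has_derivative F') (at x)"
  shows "isCont (\<lambda>y. norm (F y - F x - F' (y - x)) / norm (y - x)) x"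
proof -
  have "((\<lambda>y. (F y - F x - F' (y - x)) /\<^sub>R norm (y - x)) \<longlongrightarrow> 0) (at x)"
    using assms by (simp add: has_derivative_at_within)
  from tendsto_norm[OF this]
  show ?thesis
    \<comment> \<open>the quotient is \<open>0 / 0 = 0\<close> at \<open>y = x\<close>\<close>
    by (simp add: isCont_def divide_inverse mult.commute)
qed

lemma has_derivative_norm_le_of_lipschitz:
  fixes F :: "'a::real_normed_vector \<Rightarrow> 'b::real_normed_vector"
  assumes F': "(F has_derivative F') (at x)"
    and "open U" "x \<in> U" and lip: "L-lipschitz_on U F"
  shows "norm (F' v) \<le> L * norm v"
proof (cases "v = 0")
  case True
  then show ?thesis
    using lipschitz_on_nonneg[OF lip] has_derivative_linear[OF F'] by (simp add: linear_0)
next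
  case False
  define r where "r y = norm (F y - F x - F' (y - x)) / norm (y - x)" for y
  have path: "((\<lambda>t. x + t *\<^sub>R v) \<longlongrightarrow> x) (at_right 0)"
    by (auto intro!: tendsto_eq_intros)
  have lim: "((\<lambda>t. L + r (x + t *\<^sub>R v)) \<longlongrightarrow> L) (at_right 0)"
    using tendsto_add[OF tendsto_const
        isCont_tendsto_compose[OF isCont_derivative_remainder[OF F', folded r_def] path]]
    by (simp add: r_def)
  have "\<forall>\<^sub>F t in at_right 0. norm (F' v) / norm v \<le> L + r (x + t *\<^sub>R v)"
    using topological_tendstoD[OF path \<open>open U\<close> \<open>x \<in> U\<close>] eventually_at_right_less[of 0]
  proof eventually_elim
    case (elim t)
    define y where "y = x + t *\<^sub>R v"
    have "t * norm (F' v) = norm (F' (y - x))"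
      using elim has_derivative_linear[OF F'] by (simp add: y_def linear_scale)
    also have "\<dots> \<le> norm (F y - F x) + norm (F y - F x - F' (y - x))"
      by (rule order_trans[OF _ norm_triangle_ineq4]) simp
    also have "\<dots> \<le> L * (t * norm v) + r y * (t * norm v)"
      using lipschitz_onD[OF lip, of y x] elim False \<open>x \<in> U\<close>
      by (simp add: y_def r_def dist_norm)
    finally have "t * norm (F' v) \<le> t * ((L + r y) * norm v)"
      by (simp add: algebra_simps)
    then show ?case
      using elim False by (simp add: y_def divide_le_eq)
  qed
  then have "norm (F' v) / norm v \<le> L"
    by (rule tendsto_lowerbound[OF lim]) simp
  then show ?thesis
    using False by (simp add: divide_le_eq)
qed

lemma norm_le_SUP_norm:
  assumes "compact S" and "continuous_on S g" and "x \<in> S"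
  shows "norm (g x) \<le> (SUP y\<in>S. norm (g y))"
proof (rule cSUP_upper[OF assms(3)])
  have "compact ((\<lambda>y. norm (g y)) ` S)"
    using assms by (intro compact_continuous_image continuous_on_norm)
  then show "bdd_above ((\<lambda>y. norm (g y)) ` S)"
    by (intro bounded_imp_bdd_above compact_imp_bounded)
qed

lemma eventually_norm_quadratic_path_less:
  fixes a d e :: "'a::real_inner"
  assumes "0 < a \<bullet> d"
  shows "\<forall>\<^sub>F t in at_right 0. norm (a - t *\<^sub>R d + t\<^sup>2 *\<^sub>R e) < norm a"
proof -
  define p where "p t = - 2 * (a \<bullet> d) + t * (d \<bullet> d + 2 * (a \<bullet> e)) - 2 * t\<^sup>2 * (d \<bullet> e)
    + t ^ 3 * (e \<bullet> e)" for t :: real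
  have expand: "(norm (a - t *\<^sub>R d + t\<^sup>2 *\<^sub>R e))\<^sup>2 = (norm a)\<^sup>2 + t * p t" for t
    unfolding power2_norm_eq_inner
    by (simp add: p_def inner_add_left inner_add_right inner_diff_left
        inner_diff_right inner_commute[of d a] inner_commute[of e a] inner_commute[of e d]
        algebra_simps power2_eq_square power3_eq_cube)
  have "(p \<longlongrightarrow> - 2 * (a \<bullet> d)) (at_right 0)"
    unfolding p_def[abs_def] by (auto intro!: tendsto_eq_intros)
  then have "\<forall>\<^sub>F t in at_right 0. p t < 0"
    by (rule order_tendstoD(2)) (use assms in simp)
  then show ?thesis
    using eventually_at_right_less[of 0]
  proof eventually_elim
    case (elim t)
    then have "(norm (a - t *\<^sub>R d + t\<^sup>2 *\<^sub>R e))\<^sup>2 < (norm a)\<^sup>2"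
      by (simp add: expand mult_pos_neg)
    then show ?case
      by (rule power2_less_imp_less) simp
  qed
qed

section \<open>The Gram defect and the set stiefel_eps\<close>

lemma has_derivative_gram:
  "((\<lambda>Y::real^'p^'n. transpose Y ** Y - mat 1) has_derivative
     (\<lambda>V. transpose Y ** V + transpose V ** Y)) (at Y within S)"
  using has_derivative_diff[OF has_derivative_matrix_mult[OF
      has_derivative_transpose[OF has_derivative_ident] has_derivative_ident]
      has_derivative_const[of "mat 1"]]
  by simp

lemma continuous_on_gram:
  "continuous_on S (\<lambda>Y::real^'p^'n. transpose Y ** Y - mat 1)"
  using has_derivative_gram by (rule has_derivative_continuous_on)

lemma inner_symmetric_gram_derivative:
  fixes S :: "real^'p^'p" and X V :: "real^'p^'n"
  assumes "transpose S = S"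
  shows "S \<bullet> (transpose X ** V + transpose V ** X) = 2 * (S \<bullet> (transpose X ** V))"
proof -
  have "S \<bullet> (transpose V ** X) = transpose S \<bullet> transpose (transpose V ** X)"
    by (simp only: inner_transpose)
  also have "\<dots> = S \<bullet> (transpose X ** V)"
    by (simp only: assms matrix_transpose_mul transpose_transpose)
  finally have "S \<bullet> (transpose V ** X) = S \<bullet> (transpose X ** V)" .
  then show ?thesis
    by (simp add: inner_add_right)
qed

lemma gram_along_path:
  fixes X :: "real^'p^'n"
  defines "C \<equiv> transpose X ** X - mat 1"
  shows "transpose (X - t *\<^sub>R (X ** C)) ** (X - t *\<^sub>R (X ** C)) - mat 1
    = C - t *\<^sub>R (2 *\<^sub>R (C + C ** C)) + t\<^sup>2 *\<^sub>R (C ** (C + C ** C))"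
proof -
  have C_sym: "transpose C = C"
    by (simp add: C_def transpose_diff matrix_transpose_mul)
  have path: "X - t *\<^sub>R (X ** C) = X ** (mat 1 - t *\<^sub>R C)"
    by (simp add: matrix_mult.diff_right matrix_mult.scaleR_right)
  have "transpose (mat 1 - t *\<^sub>R C) = mat 1 - t *\<^sub>R C"
    by (simp add: transpose_diff transpose_scalar C_sym)
  then have "transpose (X - t *\<^sub>R (X ** C)) ** (X - t *\<^sub>R (X ** C))
      = (mat 1 - t *\<^sub>R C) ** ((transpose X ** X) ** (mat 1 - t *\<^sub>R C))"
    by (simp add: path matrix_transpose_mul matrix_mul_assoc)
  also have "transpose X ** X = C + mat 1"
    by (simp add: C_def)
  also have "(C + mat 1) ** (mat 1 - t *\<^sub>R C) = C + mat 1 - t *\<^sub>R (C ** C + C)"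
    by (simp add: matrix_mult.diff_right matrix_mult.add_left matrix_mult.scaleR_right)
  also have "(mat 1 - t *\<^sub>R C) ** (C + mat 1 - t *\<^sub>R (C ** C + C))
      = C + mat 1 - t *\<^sub>R (C ** C + C) - t *\<^sub>R (C ** C + C - t *\<^sub>R (C ** (C + C ** C)))"
    by (simp add: matrix_mult.diff_left matrix_mult.scaleR_left matrix_mult.diff_right
        matrix_mult.add_right matrix_mult.scaleR_right algebra_simps)
  finally show ?thesis
    by (simp add: vec_eq_iff algebra_simps power2_eq_square)
qed

lemma compact_stiefel_eps: "compact (stiefel_eps \<epsilon> :: (real^'p^'n) set)"
proof -
  let ?I = "mat 1 :: real^'p^'p"
  have "closed (stiefel_eps \<epsilon> :: (real^'p^'n) set)"
    unfolding stiefel_eps_def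
    by (intro closed_Collect_le continuous_on_norm continuous_on_gram continuous_on_const)
  moreover have "norm X \<le> sqrt (1 + \<epsilon>) * norm ?I" if "X \<in> stiefel_eps \<epsilon>" for X :: "real^'p^'n"
  proof (rule power2_le_imp_le)
    have X: "norm (transpose X ** X - mat 1) \<le> \<epsilon>"
      using that by (simp add: stiefel_eps_def)
    then have "0 \<le> \<epsilon>"
      by (rule order_trans[OF norm_ge_zero])
    with norm_sq_matrix_mult_left_bounds(2)[OF X, of ?I]
    show "(norm X)\<^sup>2 \<le> (sqrt (1 + \<epsilon>) * norm ?I)\<^sup>2"
      by (simp add: power_mult_distrib)
    from \<open>0 \<le> \<epsilon>\<close> show "0 \<le> sqrt (1 + \<epsilon>) * norm ?I"
      by simp
  qed
  then have "bounded (stiefel_eps \<epsilon> :: (real^'p^'n) set)"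
    by (auto simp: bounded_iff)
  ultimately show ?thesis
    by (simp add: compact_eq_bounded_closed)
qed

lemma stiefel_eps_subset_closure:
  assumes "0 < \<epsilon>" and "\<epsilon> < 1"
  shows "stiefel_eps \<epsilon> \<subseteq> closure {X :: real^'p^'n. norm (transpose X ** X - mat 1) < \<epsilon>}"
    (is "_ \<subseteq> closure ?U")
proof
  fix X :: "real^'p^'n"
  assume "X \<in> stiefel_eps \<epsilon>"
  define C where "C = transpose X ** X - mat 1"
  have "norm C \<le> \<epsilon>"
    using \<open>X \<in> stiefel_eps \<epsilon>\<close> by (simp add: stiefel_eps_def C_def)
  show "X \<in> closure ?U"
  proof (cases "norm C < \<epsilon>")
    case True
    then show ?thesis
      using closure_subset by (fastforce simp: C_def)
  next
    case False
    with \<open>norm C \<le> \<epsilon>\<close> have nC: "norm C = \<epsilon>"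
      by simp
    txt \<open>A boundary point is approached from the interior along \<open>X - t X C\<close>: the Gram defect
      moves in the direction \<open>-(C + C\<^sup>2)\<close>, and \<open>\<langle>C, C + C\<^sup>2\<rangle> \<ge> |C|\<^sup>2 (1 - |C|) > 0\<close>.\<close>
    have "\<bar>C \<bullet> (C ** C)\<bar> \<le> norm C * (norm C * norm C)"
      by (rule abs_inner_matrix_mult_le)
    moreover have "norm C * (norm C * norm C) < norm C * norm C"
      using nC assms by simp
    ultimately have "0 < C \<bullet> (2 *\<^sub>R (C + C ** C))"
      by (simp add: inner_add_right flip: power2_norm_eq_inner) (simp add: power2_eq_square)
    then have "\<forall>\<^sub>F t in at_right 0. X - t *\<^sub>R (X ** C) \<in> ?U"
      by (rule eventually_mono[OF eventually_norm_quadratic_path_less])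
        (simp add: gram_along_path[of X, folded C_def] nC)
    moreover have "((\<lambda>t. X - t *\<^sub>R (X ** C)) \<longlongrightarrow> X) (at_right 0)"
      by (auto intro!: tendsto_eq_intros)
    ultimately show ?thesis
      by (intro Lim_in_closed_set[OF closed_closure _ trivial_limit_at_right_real])
        (auto elim: eventually_mono intro: closure_subset[THEN subsetD])
  qed
qed

lemma norm_frechet_derivative_fgrad_le:
  fixes f :: "real^'p^'n \<Rightarrow> real"
  assumes f: "twice_cont_diff f" and eps: "0 < \<epsilon>" "\<epsilon> < 1"
    and lip: "L-lipschitz_on (stiefel_eps \<epsilon>) (fgrad f)" and X: "X \<in> stiefel_eps \<epsilon>"
  shows "norm (frechet_derivative (fgrad f) (at X) V) \<le> L * norm V"
proof -
  let ?U = "{Y :: real^'p^'n. norm (transpose Y ** Y - mat 1) < \<epsilon>}"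
  let ?B = "{Y. norm (frechet_derivative (fgrad f) (at Y) V) \<le> L * norm V}"
  have "open ?U"
    by (intro open_Collect_less continuous_on_norm continuous_on_gram continuous_on_const)
  have "?U \<subseteq> stiefel_eps \<epsilon>"
    by (auto simp: stiefel_eps_def)
  have "?U \<subseteq> ?B"
  proof
    fix Y assume "Y \<in> ?U"
    have "(fgrad f has_derivative frechet_derivative (fgrad f) (at Y)) (at Y)"
      using f by (simp add: twice_cont_diff_def frechet_derivative_works)
    from has_derivative_norm_le_of_lipschitz[OF this \<open>open ?U\<close> \<open>Y \<in> ?U\<close>
        lipschitz_on_subset[OF lip \<open>?U \<subseteq> stiefel_eps \<epsilon>\<close>]]
    show "Y \<in> ?B" by simp
  qed
  moreover have "closed ?B"
    using f unfolding twice_cont_diff_def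
    by (intro closed_Collect_le continuous_on_norm continuous_on_const continuous_on_mult) auto
  ultimately have "closure ?U \<subseteq> ?B"
    by (rule closure_minimal)
  with stiefel_eps_subset_closure[OF eps] X show ?thesis
    by blast
qed

section \<open>The merit function along the landing field\<close>

lemma inner_fgrad_Lcal:
  fixes f :: "real^'p^'n \<Rightarrow> real" and X V :: "real^'p^'n"
  assumes f: "twice_cont_diff f"
  defines "G \<equiv> fgrad f X" and "H \<equiv> frechet_derivative (fgrad f) (at X)"
    and "C \<equiv> transpose X ** X - mat 1" and "\<psi> \<equiv> msym (transpose X ** fgrad f X)"
  shows "fgrad (Lcal f \<mu>) X \<bullet> V = G \<bullet> V - (1/2) * (G \<bullet> (V ** C)) - (1/2) * (H V \<bullet> (X ** C))
     - \<psi> \<bullet> (transpose X ** V) + \<mu> * (C \<bullet> (transpose X ** V))"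
proof -
  have dfX: "(f has_derivative (\<lambda>h. G \<bullet> h)) (at X)"
    using f unfolding twice_cont_diff_def G_def by (blast intro: has_derivative_fgrad)
  have dG: "(fgrad f has_derivative H) (at X)"
    using f unfolding twice_cont_diff_def H_def frechet_derivative_works by blast
  have C_sym: "transpose C = C" and \<psi>_sym: "transpose \<psi> = \<psi>"
    by (simp_all add: C_def \<psi>_def transpose_msym matrix_transpose_mul transpose_diff)
  have Lcal_eq: "Lcal f \<mu> = (\<lambda>Y. f Y
      - (1/2) * (msym (transpose Y ** fgrad f Y) \<bullet> (transpose Y ** Y - mat 1))
      + \<mu> * ((1/4) * ((transpose Y ** Y - mat 1) \<bullet> (transpose Y ** Y - mat 1))))"
    by (simp add: fun_eq_iff Lcal_def Ncal_def power2_norm_eq_inner)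
  have "(Lcal f \<mu> has_derivative (\<lambda>V. G \<bullet> V
      - (1/2) * (\<psi> \<bullet> (transpose X ** V + transpose V ** X)
                 + msym (transpose X ** H V + transpose V ** G) \<bullet> C)
      + \<mu> * ((1/4) * (C \<bullet> (transpose X ** V + transpose V ** X)
                     + (transpose X ** V + transpose V ** X) \<bullet> C)))) (at X)"
    unfolding Lcal_eq G_def C_def \<psi>_def
    by (intro has_derivative_add has_derivative_diff has_derivative_mult_right has_derivative_inner
        has_derivative_msym has_derivative_matrix_mult has_derivative_transpose has_derivative_gram
        has_derivative_ident dfX[unfolded G_def] dG)
  then have raw: "fgrad (Lcal f \<mu>) X \<bullet> V = G \<bullet> V
      - (1/2) * (\<psi> \<bullet> (transpose X ** V + transpose V ** X)
                 + msym (transpose X ** H V + transpose V ** G) \<bullet> C)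
      + \<mu> * ((1/4) * (C \<bullet> (transpose X ** V + transpose V ** X)
                     + (transpose X ** V + transpose V ** X) \<bullet> C))"
    by (rule fgrad_inner_eq)
  have "msym (transpose X ** H V + transpose V ** G) \<bullet> C = H V \<bullet> (X ** C) + G \<bullet> (V ** C)"
    by (simp only: inner_msym_symmetric[OF C_sym] inner_add_left inner_matrix_mult_left
        transpose_transpose)
  then show ?thesis
    unfolding raw inner_commute[of _ C] inner_symmetric_gram_derivative[OF C_sym]
      inner_symmetric_gram_derivative[OF \<psi>_sym]
    by (simp add: algebra_simps)
qed

lemma inner_fgrad_Lcal_rgrad:
  fixes f :: "real^'p^'n \<Rightarrow> real" and X :: "real^'p^'n"
  assumes f: "twice_cont_diff f"
  defines "G \<equiv> fgrad f X" and "H \<equiv> frechet_derivative (fgrad f) (at X)"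
    and "C \<equiv> transpose X ** X - mat 1" and "\<Omega> \<equiv> mskew (fgrad f X ** transpose X)"
    and "W \<equiv> rgrad f X"
  shows "fgrad (Lcal f \<mu>) X \<bullet> W
    = (norm \<Omega>)\<^sup>2 - (1/2) * (G \<bullet> (W ** C)) - (1/2) * (H W \<bullet> (X ** C))"
proof -
  have C_sym: "transpose C = C"
    by (simp add: C_def matrix_transpose_mul transpose_diff)
  have W: "W = \<Omega> ** X"
    by (simp add: W_def \<Omega>_def rgrad_def)
  txt \<open>\<open>X\<^sup>T W\<close> is skew, hence orthogonal to the symmetric matrices \<open>C\<close> and \<open>sym(X\<^sup>T G)\<close>: the
    tangential part \<open>W\<close> of the landing field does not see the constraint terms of \<open>\<L>\<close>.\<close>
  have "transpose (transpose X ** W) = transpose X ** (transpose \<Omega> ** X)"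
    by (simp add: W matrix_transpose_mul matrix_mul_assoc)
  also have "\<dots> = - (transpose X ** W)"
    by (simp add: W \<Omega>_def transpose_mskew matrix_mult.minus_left matrix_mult.minus_right)
  finally have XW_skew: "transpose (transpose X ** W) = - (transpose X ** W)" .
  have "G \<bullet> W = \<Omega> \<bullet> (G ** transpose X)"
    by (simp only: W inner_commute[of G] inner_matrix_mult_right)
  also have "\<dots> = (norm \<Omega>)\<^sup>2"
    unfolding \<Omega>_def G_def by (subst inner_commute) (rule inner_mskew_self)
  finally have GW: "G \<bullet> W = (norm \<Omega>)\<^sup>2" .
  show ?thesis
    by (simp only: inner_fgrad_Lcal[OF f, of \<mu> X, folded G_def H_def C_def] GW
        inner_symmetric_skew[OF transpose_msym XW_skew] inner_symmetric_skew[OF C_sym XW_skew])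
qed

lemma inner_fgrad_Lcal_normal:
  fixes f :: "real^'p^'n \<Rightarrow> real" and X :: "real^'p^'n"
  assumes f: "twice_cont_diff f"
  defines "H \<equiv> frechet_derivative (fgrad f) (at X)"
    and "C \<equiv> transpose X ** X - mat 1" and "\<psi> \<equiv> msym (transpose X ** fgrad f X)"
  shows "fgrad (Lcal f \<mu>) X \<bullet> (X ** C)
    = - (3/2) * (\<psi> \<bullet> (C ** C)) - (1/2) * (H (X ** C) \<bullet> (X ** C)) + \<mu> * (norm (X ** C))\<^sup>2"
proof -
  have C_sym: "transpose C = C"
    by (simp add: C_def matrix_transpose_mul transpose_diff)
  have CC_sym: "transpose (C ** C) = C ** C"
    by (simp add: matrix_transpose_mul C_sym)
  have GXC: "fgrad f X \<bullet> (X ** C) = \<psi> \<bullet> C"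
    unfolding \<psi>_def by (rule inner_matrix_mult_symmetric[OF C_sym])
  have GXCC: "fgrad f X \<bullet> ((X ** C) ** C) = \<psi> \<bullet> (C ** C)"
    unfolding \<psi>_def matrix_mul_assoc[symmetric] by (rule inner_matrix_mult_symmetric[OF CC_sym])
  have XXC: "transpose X ** (X ** C) = C + C ** C"
    by (simp add: matrix_mul_assoc C_def matrix_mult.diff_left)
  have CXXC: "C \<bullet> (C + C ** C) = (norm (X ** C))\<^sup>2"
    by (simp only: power2_norm_eq_inner inner_matrix_mult_left XXC)
  show ?thesis
    by (simp only: inner_fgrad_Lcal[OF f, of \<mu> X, folded H_def C_def \<psi>_def] GXC GXCC XXC CXXC
        inner_add_right[of \<psi>])
qed

section \<open>The descent estimate\<close>

lemma tangential_part_lower_bound: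
  fixes \<epsilon> \<omega> w b :: real
  assumes "0 \<le> \<epsilon>" and "\<epsilon> < 1" and "w\<^sup>2 \<le> (1 + \<epsilon>) * \<omega>"
  shows "- (1 + \<epsilon>) * b\<^sup>2 / (2 * (1 - \<epsilon>)) \<le> \<omega> - w\<^sup>2 / 2 - b * w"
proof -
  \<comment> \<open>\<open>\<omega> - w\<^sup>2/2 \<ge> A w\<^sup>2\<close>, and completing the square gives \<open>A w\<^sup>2 - b w \<ge> -b\<^sup>2/(4A)\<close>\<close>
  define A where "A = (1 - \<epsilon>) / (2 * (1 + \<epsilon>))"
  have "0 < A"
    using assms by (simp add: A_def)
  have "A * w\<^sup>2 \<le> \<omega> - w\<^sup>2 / 2"
    using assms by (simp add: A_def field_simps)
  moreover have "- b\<^sup>2 / (4 * A) \<le> A * w\<^sup>2 - b * w"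
  proof -
    have "0 \<le> (2 * A * w - b)\<^sup>2"
      by simp
    then show ?thesis
      using \<open>0 < A\<close> by (simp add: field_simps power2_eq_square)
  qed
  moreover have "b\<^sup>2 / (4 * A) = (1 + \<epsilon>) * b\<^sup>2 / (2 * (1 - \<epsilon>))"
    using assms by (simp add: A_def field_simps)
  ultimately show ?thesis
    by linarith
qed

lemma normal_part_lower_bound:
  fixes \<epsilon> L s Q \<mu> c x t3 t4 :: real
  assumes "0 \<le> L" and "0 \<le> s" and "0 \<le> Q" and "\<epsilon> < 3/4"
    and "t3 \<le> s * c\<^sup>2" and "t4 \<le> L * x\<^sup>2" and "(1 - \<epsilon>) * c\<^sup>2 \<le> x\<^sup>2"
    and \<mu>: "2 * (L * (1 - \<epsilon>) + 3 * s + Q) \<le> (3 - 4 * \<epsilon>) * \<mu>"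
  shows "Q * c\<^sup>2 / 2 + \<mu> * c\<^sup>2 / 4 \<le> - (3/2) * t3 - t4 / 2 + \<mu> * x\<^sup>2"
proof -
  have "(3 - 4 * \<epsilon>) * (L / 2) \<le> (3 - 4 * \<epsilon>) * \<mu>"
    using assms by (simp add: algebra_simps)
  then have "L / 2 \<le> \<mu>"
    using \<open>\<epsilon> < 3/4\<close> by simp
  then have "(\<mu> - L / 2) * ((1 - \<epsilon>) * c\<^sup>2) \<le> (\<mu> - L / 2) * x\<^sup>2"
    using assms by (intro mult_left_mono) auto
  moreover have "c\<^sup>2 * (2 * (L * (1 - \<epsilon>) + 3 * s + Q)) \<le> c\<^sup>2 * ((3 - 4 * \<epsilon>) * \<mu>)"
    using \<mu> by (rule mult_left_mono) simp
  moreover have "s * c\<^sup>2 * 3 \<ge> 3 * t3"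
    using assms by simp
  ultimately show ?thesis
    using assms by (simp add: algebra_simps)
qed

lemma landing_descent_inequality:
  fixes \<epsilon> L Lh s lam \<mu> c w x \<omega> t1 t2 t3 t4 :: real
  assumes eps: "0 \<le> \<epsilon>" "\<epsilon> < 3/4" and lam: "0 < lam" and L: "0 \<le> L" "L \<le> Lh"
    and s: "0 \<le> s" and nonneg: "0 \<le> c" "0 \<le> w" "0 \<le> x"
    and w: "w\<^sup>2 \<le> (1 + \<epsilon>) * \<omega>" and x: "(1 - \<epsilon>) * c\<^sup>2 \<le> x\<^sup>2" "x\<^sup>2 \<le> (1 + \<epsilon>) * c\<^sup>2"
    and t: "\<bar>t1\<bar> \<le> Lh * w * c" "\<bar>t2\<bar> \<le> Lh * w * x" "t3 \<le> s * c\<^sup>2" "t4 \<le> L * x\<^sup>2"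
    and \<mu>: "2 / (3 - 4 * \<epsilon>) * (L * (1 - \<epsilon>) + 3 * s + Lh\<^sup>2 * (1 + \<epsilon>)\<^sup>2 / (lam * (1 - \<epsilon>))) \<le> \<mu>"
  shows "(1/2) * w\<^sup>2 + lam * \<mu> * ((1/4) * c\<^sup>2)
    \<le> \<omega> - (1/2) * t1 - (1/2) * t2 + lam * (- (3/2) * t3 - (1/2) * t4 + \<mu> * x\<^sup>2)"
proof -
  define b where "b = Lh * (c + x) / 2"
  define Q where "Q = Lh\<^sup>2 * (1 + \<epsilon>)\<^sup>2 / (lam * (1 - \<epsilon>))"
  have "0 \<le> Q"
    using eps lam by (simp add: Q_def)
  have cross: "- b * w \<le> - (1/2) * t1 - (1/2) * t2"
    using t(1,2) by (simp add: b_def abs_le_iff algebra_simps)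
  have "(c + x)\<^sup>2 \<le> 4 * (1 + \<epsilon>) * c\<^sup>2"
  proof -
    have "0 \<le> (c - x)\<^sup>2" and "0 \<le> \<epsilon> * c\<^sup>2"
      using eps by simp_all
    then show ?thesis
      using x(2) by (simp add: power2_eq_square algebra_simps)
  qed
  then have b: "b\<^sup>2 \<le> (1 + \<epsilon>) * Lh\<^sup>2 * c\<^sup>2"
  proof -
    assume cx: "(c + x)\<^sup>2 \<le> 4 * (1 + \<epsilon>) * c\<^sup>2"
    have "b\<^sup>2 = Lh\<^sup>2 * (c + x)\<^sup>2 / 4"
      by (simp add: b_def power_divide power_mult_distrib)
    also have "\<dots> \<le> Lh\<^sup>2 * (4 * (1 + \<epsilon>) * c\<^sup>2) / 4"
      using cx by (intro divide_right_mono mult_left_mono) simp_all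
    also have "\<dots> = (1 + \<epsilon>) * Lh\<^sup>2 * c\<^sup>2"
      by (simp add: field_simps)
    finally show ?thesis .
  qed
  have tangential: "- (1 + \<epsilon>) * b\<^sup>2 / (2 * (1 - \<epsilon>)) \<le> \<omega> - w\<^sup>2 / 2 - b * w"
    using eps w by (intro tangential_part_lower_bound) auto
  have "(1 + \<epsilon>) * b\<^sup>2 / (2 * (1 - \<epsilon>)) \<le> lam * (Q * c\<^sup>2 / 2)"
  proof -
    have "(1 + \<epsilon>) * b\<^sup>2 \<le> (1 + \<epsilon>) * ((1 + \<epsilon>) * Lh\<^sup>2 * c\<^sup>2)"
      using b eps by (intro mult_left_mono) auto
    also have "\<dots> = lam * (Q * c\<^sup>2 / 2) * (2 * (1 - \<epsilon>))"
      using eps lam by (simp add: Q_def power2_eq_square field_simps)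
    finally show ?thesis
      using eps by (simp add: divide_le_eq)
  qed
  moreover have "lam * (Q * c\<^sup>2 / 2) + lam * \<mu> * ((1/4) * c\<^sup>2)
      \<le> lam * (- (3/2) * t3 - (1/2) * t4 + \<mu> * x\<^sup>2)"
  proof -
    have "2 * (L * (1 - \<epsilon>) + 3 * s + Q) \<le> (3 - 4 * \<epsilon>) * \<mu>"
      using \<mu> eps(2) by (simp add: Q_def field_simps)
    with L(1) s \<open>0 \<le> Q\<close> eps(2) t(3,4) x(1)
    have "Q * c\<^sup>2 / 2 + \<mu> * c\<^sup>2 / 4 \<le> - (3/2) * t3 - t4 / 2 + \<mu> * x\<^sup>2"
      by (rule normal_part_lower_bound)
    from mult_left_mono[OF this, of lam] lam show ?thesis
      by (simp add: algebra_simps)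
  qed
  ultimately show ?thesis
    using cross tangential by linarith
qed

lemma inner_fgrad_Lcal_landing_ge:
  fixes f :: "real^'p^'n \<Rightarrow> real" and X :: "real^'p^'n"
  assumes f: "twice_cont_diff f"
    and X: "norm (transpose X ** X - mat 1) \<le> \<epsilon>" and eps: "\<epsilon> < 3/4" and lam: "0 < lam"
    and L: "0 \<le> L" "L \<le> Lh"
    and hess: "\<And>V. norm (frechet_derivative (fgrad f) (at X) V) \<le> L * norm V"
    and grad: "norm (fgrad f X) \<le> Lh"
    and sym: "norm (msym (transpose X ** fgrad f X)) \<le> s"
    and \<mu>: "2 / (3 - 4 * \<epsilon>) * (L * (1 - \<epsilon>) + 3 * s + Lh\<^sup>2 * (1 + \<epsilon>)\<^sup>2 / (lam * (1 - \<epsilon>))) \<le> \<mu>"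
  shows "(1/2) * (norm (rgrad f X))\<^sup>2 + lam * \<mu> * Ncal X \<le> fgrad (Lcal f \<mu>) X \<bullet> landing f lam X"
proof -
  define G where "G = fgrad f X"
  define H where "H = frechet_derivative (fgrad f) (at X)"
  define C where "C = transpose X ** X - mat 1"
  define \<psi> where "\<psi> = msym (transpose X ** fgrad f X)"
  define \<Omega> where "\<Omega> = mskew (fgrad f X ** transpose X)"
  define W where "W = rgrad f X"
  have "0 \<le> \<epsilon>" and "0 \<le> s"
    using X sym by (auto intro: order_trans[OF norm_ge_zero])
  note x = norm_sq_matrix_mult_left_bounds[OF X, of C]
  have w: "(norm W)\<^sup>2 \<le> (1 + \<epsilon>) * (norm \<Omega>)\<^sup>2"
    using norm_sq_matrix_mult_right_le[OF X, of \<Omega>] by (simp add: W_def \<Omega>_def rgrad_def)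
  have t1: "\<bar>G \<bullet> (W ** C)\<bar> \<le> Lh * norm W * norm C"
    using abs_inner_matrix_mult_le[of G W C] mult_right_mono[OF grad, of "norm W * norm C"]
    by (simp add: G_def mult.assoc)
  have t2: "\<bar>H W \<bullet> (X ** C)\<bar> \<le> Lh * norm W * norm (X ** C)"
    using Cauchy_Schwarz_ineq2[of "H W" "X ** C"] mult_right_mono[OF hess, of "norm (X ** C)" W]
      mult_right_mono[OF L(2), of "norm W * norm (X ** C)"]
    by (simp add: H_def mult.assoc)
  have t3: "\<psi> \<bullet> (C ** C) \<le> s * (norm C)\<^sup>2"
    using abs_inner_matrix_mult_le[of \<psi> C C] mult_right_mono[OF sym, of "norm C * norm C"]
    by (simp add: \<psi>_def power2_eq_square)
  have t4: "H (X ** C) \<bullet> (X ** C) \<le> L * (norm (X ** C))\<^sup>2"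
    using norm_cauchy_schwarz[of "H (X ** C)" "X ** C"]
      mult_right_mono[OF hess, of "norm (X ** C)" "X ** C"]
    by (simp add: H_def power2_eq_square mult.assoc)
  from landing_descent_inequality[OF \<open>0 \<le> \<epsilon>\<close> eps lam L \<open>0 \<le> s\<close> norm_ge_zero norm_ge_zero
      norm_ge_zero w x t1 t2 t3 t4 \<mu>]
  show ?thesis
    unfolding landing_def inner_add_right inner_scaleR_right Ncal_def
      inner_fgrad_Lcal_rgrad[OF f] inner_fgrad_Lcal_normal[OF f]
    by (simp add: G_def H_def C_def \<psi>_def \<Omega>_def W_def)
qed

theorem proposition6:
  fixes f :: "real^'p^'n \<Rightarrow> real"
    and lam \<epsilon> L \<mu> \<nu> :: real
  assumes np: "CARD('p) \<le> CARD('n)"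
    and lam: "lam > 0"
    and eps: "0 < \<epsilon>" "\<epsilon> < 3/4"
    and f: "twice_cont_diff f"
    and L: "L > 0" "L-lipschitz_on (stiefel_eps \<epsilon>) (fgrad f)"
    and mu: "\<mu> \<ge> 2 / (3 - 4*\<epsilon>) *
        (L * (1 - \<epsilon>)
         + 3 * (SUP X\<in>stiefel_eps \<epsilon>. norm (msym (transpose X ** fgrad f X)))
         + (max L (SUP X\<in>stiefel_eps \<epsilon>. norm (fgrad f X)))\<^sup>2
             * (1 + \<epsilon>)\<^sup>2 / (lam * (1 - \<epsilon>)))"
    and nu: "\<nu> = lam * \<mu>"
  shows "\<forall>X\<in>stiefel_eps \<epsilon>.
           fgrad (Lcal f \<mu>) X \<bullet> landing f lam X
             \<ge> (1/2) * (norm (rgrad f X))\<^sup>2 + \<nu> * Ncal X"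
proof
  fix X :: "real^'p^'n"
  assume X: "X \<in> stiefel_eps \<epsilon>"
  have "continuous_on (stiefel_eps \<epsilon>) (\<lambda>Y. msym (transpose Y ** fgrad f Y))"
    by (intro bounded_linear.continuous_on[OF bounded_linear_msym] matrix_mult.continuous_on
        bounded_linear.continuous_on[OF bounded_linear_transpose] continuous_on_id
        continuous_on_fgrad[OF f])
  note sym = norm_le_SUP_norm[OF compact_stiefel_eps this X]
  have grad: "norm (fgrad f X) \<le> max L (SUP Y\<in>stiefel_eps \<epsilon>. norm (fgrad f Y))"
    using norm_le_SUP_norm[OF compact_stiefel_eps continuous_on_fgrad[OF f] X] by linarith
  have hess: "norm (frechet_derivative (fgrad f) (at X) V) \<le> L * norm V" for V
    using eps by (intro norm_frechet_derivative_fgrad_le[OF f _ _ L(2) X]) auto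
  from inner_fgrad_Lcal_landing_ge[OF f _ eps(2) lam _ max.cobounded1 hess grad sym mu] X L(1)
  show "fgrad (Lcal f \<mu>) X \<bullet> landing f lam X \<ge> (1/2) * (norm (rgrad f X))\<^sup>2 + \<nu> * Ncal X"
    by (simp add: stiefel_eps_def nu)
qed

end
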